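(* For every graph $G$, $\chi_{td}(\mathrm{cl}(G)) \leq 2\chi_{td}(G)+1$.
   Context: For a simple graph $G$ and a positive integer $k$, a proper $k$-total difference labeling of $G$ is a function $f: V(G)\to\{1,\dots,k\}$, extended to edges by $f(\{u,v\}) = |f(u)-f(v)|$, such that: (i) adjacent vertices receive different labels; (ii) two distinct edges sharing a vertex receive different labels; (iii) no edge receives the same label as either of its endpoints. $\chi_{td}(G)$ denotes the smallest $k$ for which such a labeling exists. The clone $\mathrm{cl}(G)$ of $G$ is the Cartesian product $G \,\square\, K_2$: it consists of two copies $\{x_i\}$ and $\{y_i\}$ of the vertex set $\{g_i\}$ of $G$, where $x_i x_j$ and $y_i y_j$ are edges iff $g_i g_j$ is an edge of $G$, and $x_i y_j$ is an edge iff $i=j$. *)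

theory Defs
  imports Main
begin

definition simple_graph :: "'a set \<Rightarrow> ('a \<Rightarrow> 'a \<Rightarrow> bool) \<Rightarrow> bool" where
  "simple_graph V E \<longleftrightarrow> finite V \<and>
     (\<forall>u v. E u v \<longrightarrow> u \<in> V \<and> v \<in> V) \<and>
     (\<forall>u v. E u v \<longrightarrow> E v u) \<and> (\<forall>v. \<not> E v v)"

definition edge_label :: "('a \<Rightarrow> nat) \<Rightarrow> 'a \<Rightarrow> 'a \<Rightarrow> nat" where
  "edge_label f u v = (if f u \<le> f v then f v - f u else f u - f v)"

text \<open>Proper k-total difference labeling. Edges are unordered, so "two distinct
  edges sharing a vertex" means edges vu and vw with u \<noteq> w.\<close>
definition total_diff_labeling ::
  "'a set \<Rightarrow> ('a \<Rightarrow> 'a \<Rightarrow> bool) \<Rightarrow> nat \<Rightarrow> ('a \<Rightarrow> nat) \<Rightarrow> bool" where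
  "total_diff_labeling V E k f \<longleftrightarrow>
     (\<forall>v\<in>V. f v \<in> {1..k}) \<and>
     (\<forall>u v. E u v \<longrightarrow> f u \<noteq> f v) \<and>
     (\<forall>v u w. E v u \<and> E v w \<and> u \<noteq> w \<longrightarrow> edge_label f v u \<noteq> edge_label f v w) \<and>
     (\<forall>u v. E u v \<longrightarrow> edge_label f u v \<noteq> f u \<and> edge_label f u v \<noteq> f v)"

definition chi_td :: "'a set \<Rightarrow> ('a \<Rightarrow> 'a \<Rightarrow> bool) \<Rightarrow> nat" where
  "chi_td V E = (LEAST k. \<exists>f. total_diff_labeling V E k f)"

text \<open>The clone cl(G) = G \<box> K_2: vertices (v, b) with b::bool naming the copy
  (False: x-copy, True: y-copy).\<close>
definition clone_V :: "'a set \<Rightarrow> ('a \<times> bool) set" where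
  "clone_V V = V \<times> UNIV"

definition clone_E :: "'a set \<Rightarrow> ('a \<Rightarrow> 'a \<Rightarrow> bool) \<Rightarrow> ('a \<times> bool) \<Rightarrow> ('a \<times> bool) \<Rightarrow> bool" where
  "clone_E V E p q \<longleftrightarrow>
     (snd p = snd q \<and> E (fst p) (fst q)) \<or>
     (fst p = fst q \<and> fst p \<in> V \<and> snd p \<noteq> snd q)"

end

theory Submission
  imports Defs
begin

text \<open>Take a labeling f of G with k = chi_td G labels, keep it on the x-copy and shift it by
  k + 1 on the y-copy. Inside each copy the edge labels are those of f, all below k;
  every rung x_i y_i gets the label k + 1, which is larger than all of them and differs
  from every vertex label (at most k on the x-copy, at least k + 2 on the y-copy). Since
  each vertex lies on exactly one rung, the result is a proper (2k + 1)-labeling of cl(G).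
  That chi_td G is attained at all follows from the labeling by distinct powers of 3.\<close>

lemma int_edge_label: "int (edge_label f u v) = \<bar>int (f u) - int (f v)\<bar>"
  unfolding edge_label_def by auto

lemma edge_label_less:
  assumes "f u \<in> {1..k}" "f v \<in> {1..k}"
  shows "edge_label f u v < k"
  using assms unfolding edge_label_def by auto

lemma three_power_gap: "p < q \<Longrightarrow> 3 * (3::int) ^ p \<le> 3 ^ q"
  using power_increasing[of "Suc p" q "3::int"] by simp

lemma three_power_diff_neq_power:
  assumes "p \<noteq> q"
  shows "\<bar>(3::int) ^ p - 3 ^ q\<bar> \<noteq> 3 ^ p"
proof -
  have "(0::int) < 3 ^ p" by simp
  moreover have "p < q \<or> q < p" using assms by linarith
  ultimately show ?thesis
    using three_power_gap[of p q] three_power_gap[of q p] by auto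
qed

lemma three_power_diff_inj:
  assumes "p \<noteq> i" "q \<noteq> i" and eq: "\<bar>(3::int) ^ i - 3 ^ p\<bar> = \<bar>3 ^ i - 3 ^ q\<bar>"
  shows "p = q"
proof -
  have pos: "(0::int) < 3 ^ n" for n by simp
  consider (below) "p < i" "q < i" | (above) "i < p" "i < q"
    | (p_below) "p < i" "i < q" | (q_below) "q < i" "i < p"
    using assms(1,2) by linarith
  then show "p = q"
  proof cases
    case below
    then have "(3::int) ^ p = 3 ^ q"
      using eq three_power_gap[of p i] three_power_gap[of q i] pos[of p] pos[of q] by linarith
    then show ?thesis by simp
  next
    case above
    then have "(3::int) ^ p = 3 ^ q"
      using eq three_power_gap[of i p] three_power_gap[of i q] pos[of i] by linarith
    then show ?thesis by simp
  next
    case p_below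
    then show ?thesis
      using eq three_power_gap[of p i] three_power_gap[of i q] pos[of p] pos[of i] by linarith
  next
    case q_below
    then show ?thesis
      using eq three_power_gap[of q i] three_power_gap[of i p] pos[of q] pos[of i] by linarith
  qed
qed

lemma total_diff_labeling_exists:
  assumes "finite V" and edges: "\<And>u v. E u v \<Longrightarrow> u \<in> V \<and> v \<in> V" and irrefl: "\<And>v. \<not> E v v"
  shows "\<exists>k f. total_diff_labeling V E k f"
proof -
  obtain idx :: "'a \<Rightarrow> nat" and n where range: "idx ` V = {i. i < n}" and inj: "inj_on idx V"
    using finite_imp_inj_to_nat_seg[OF \<open>finite V\<close>] by blast
  define f where "f v = (3::nat) ^ idx v" for v
  have int_f: "int (f v) = 3 ^ idx v" for v
    unfolding f_def by simp
  have idx_neq: "idx u \<noteq> idx v" if "u \<in> V" "v \<in> V" "u \<noteq> v" for u v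
    using inj that unfolding inj_on_def by blast
  have idx_adj: "idx u \<noteq> idx v" if "E u v" for u v
    using idx_neq edges[OF that] irrefl that by blast
  have "total_diff_labeling V E (3 ^ n) f"
    unfolding total_diff_labeling_def
  proof (intro conjI allI impI ballI)
    fix v assume "v \<in> V"
    then have "idx v < n" using range by blast
    then show "f v \<in> {1..3 ^ n}"
      using power_increasing[of "idx v" n 3] unfolding f_def by simp
  next
    fix u v assume "E u v"
    then show "f u \<noteq> f v"
      using idx_adj unfolding f_def by simp
  next
    fix v u w assume "E v u \<and> E v w \<and> u \<noteq> w"
    then have "idx u \<noteq> idx v" "idx w \<noteq> idx v" "idx u \<noteq> idx w"
      using idx_adj idx_neq edges by blast+
    then have "\<bar>(3::int) ^ idx v - 3 ^ idx u\<bar> \<noteq> \<bar>3 ^ idx v - 3 ^ idx w\<bar>"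
      using three_power_diff_inj by blast
    then show "edge_label f v u \<noteq> edge_label f v w"
      unfolding int_edge_label[symmetric] int_f[symmetric] by simp
  next
    fix u v assume "E u v"
    have "int (edge_label f u v) = \<bar>3 ^ idx u - 3 ^ idx v\<bar>"
      "int (edge_label f u v) = \<bar>3 ^ idx v - 3 ^ idx u\<bar>"
      by (simp_all add: int_edge_label int_f abs_minus_commute)
    moreover have "\<bar>(3::int) ^ idx u - 3 ^ idx v\<bar> \<noteq> 3 ^ idx u"
      "\<bar>(3::int) ^ idx v - 3 ^ idx u\<bar> \<noteq> 3 ^ idx v"
      using idx_adj[OF \<open>E u v\<close>] three_power_diff_neq_power by metis+
    ultimately show "edge_label f u v \<noteq> f u" "edge_label f u v \<noteq> f v"
      by (metis int_f of_nat_eq_iff)+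
  qed
  then show ?thesis by blast
qed

lemma chi_td_attained:
  assumes "simple_graph V E"
  shows "\<exists>f. total_diff_labeling V E (chi_td V E) f"
proof -
  have "\<exists>k f. total_diff_labeling V E k f"
    using assms unfolding simple_graph_def by (intro total_diff_labeling_exists) auto
  then show ?thesis
    unfolding chi_td_def by (rule LeastI_ex)
qed

lemma chi_td_le: "total_diff_labeling V E k f \<Longrightarrow> chi_td V E \<le> k"
  unfolding chi_td_def by (blast intro: Least_le)

definition clone_labeling :: "nat \<Rightarrow> ('a \<Rightarrow> nat) \<Rightarrow> 'a \<times> bool \<Rightarrow> nat" where
  "clone_labeling k f p = (if snd p then f (fst p) + k + 1 else f (fst p))"

lemma edge_label_clone_labeling:
  assumes "clone_E V E p q"
  shows "edge_label (clone_labeling k f) p q =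
    (if snd p = snd q then edge_label f (fst p) (fst q) else k + 1)"
  using assms unfolding clone_E_def edge_label_def clone_labeling_def by auto

lemma total_diff_labeling_clone:
  assumes edges: "\<And>u v. E u v \<Longrightarrow> u \<in> V \<and> v \<in> V"
    and f: "total_diff_labeling V E k f"
  shows "total_diff_labeling (clone_V V) (clone_E V E) (2 * k + 1) (clone_labeling k f)"
    (is "total_diff_labeling _ ?E _ ?g")
proof -
  from f have range: "\<And>v. v \<in> V \<Longrightarrow> f v \<in> {1..k}"
    and adj: "\<And>u v. E u v \<Longrightarrow> f u \<noteq> f v"
    and incident: "\<And>v u w. E v u \<Longrightarrow> E v w \<Longrightarrow> u \<noteq> w \<Longrightarrow> edge_label f v u \<noteq> edge_label f v w"
    and endpoint: "\<And>u v. E u v \<Longrightarrow> edge_label f u v \<noteq> f u \<and> edge_label f u v \<noteq> f v"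
    unfolding total_diff_labeling_def by auto
  have layer_edge_label: "edge_label f u v < k" if "E u v" for u v
    using edges[OF that] by (intro edge_label_less range) auto
  have layer: "E (fst p) (fst q)" if "?E p q" "snd p = snd q" for p q
    using that unfolding clone_E_def by auto
  have rung: "fst p = fst q \<and> fst p \<in> V" if "?E p q" "snd p \<noteq> snd q" for p q
    using that unfolding clone_E_def by auto
  show ?thesis
    unfolding total_diff_labeling_def
  proof (intro conjI allI impI ballI)
    fix p assume "p \<in> clone_V V"
    then show "?g p \<in> {1..2 * k + 1}"
      using range[of "fst p"] unfolding clone_V_def clone_labeling_def by auto
  next
    fix p q assume "?E p q"
    then show "?g p \<noteq> ?g q"
      using adj unfolding clone_E_def clone_labeling_def by auto
  next
    fix p q r assume "?E p q \<and> ?E p r \<and> q \<noteq> r"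
    then have pq: "?E p q" and pr: "?E p r" and "q \<noteq> r" by auto
    note label_q = edge_label_clone_labeling[OF pq] and label_r = edge_label_clone_labeling[OF pr]
    have "snd p = snd q \<or> snd p = snd r"
    proof (rule ccontr)
      assume "\<not> ?thesis"
      then have "fst q = fst r" "snd q = snd r"
        using rung[OF pq] rung[OF pr] by (metis (full_types))+
      then show False
        using \<open>q \<noteq> r\<close> by (simp add: prod_eq_iff)
    qed
    then consider (layers) "snd p = snd q" "snd p = snd r"
      | (rung_q) "snd p \<noteq> snd q" "snd p = snd r"
      | (rung_r) "snd p = snd q" "snd p \<noteq> snd r"
      by blast
    then show "edge_label ?g p q \<noteq> edge_label ?g p r"
    proof cases
      case layers
      then have "fst q \<noteq> fst r"
        using \<open>q \<noteq> r\<close> by (auto simp: prod_eq_iff)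
      then show ?thesis
        using incident layer[OF pq] layer[OF pr] layers by (simp add: label_q label_r)
    next
      case rung_q
      then show ?thesis
        using layer_edge_label[OF layer[OF pr]] by (simp add: label_q label_r)
    next
      case rung_r
      then show ?thesis
        using layer_edge_label[OF layer[OF pq]] by (simp add: label_q label_r)
    qed
  next
    fix p q assume pq: "?E p q"
    have "edge_label ?g p q \<noteq> ?g p \<and> edge_label ?g p q \<noteq> ?g q"
    proof (cases "snd p = snd q")
      case True
      then show ?thesis
        using endpoint[OF layer[OF pq True]] layer_edge_label[OF layer[OF pq True]]
        unfolding edge_label_clone_labeling[OF pq] clone_labeling_def by auto
    next
      case False
      then show ?thesis
        using range rung[OF pq]
        unfolding edge_label_clone_labeling[OF pq] clone_labeling_def by force
    qed
    then show "edge_label ?g p q \<noteq> ?g p" "edge_label ?g p q \<noteq> ?g q"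
      by auto
  qed
qed

theorem mainTheorem8:
  fixes V :: "'a set" and E :: "'a \<Rightarrow> 'a \<Rightarrow> bool"
  assumes "simple_graph V E"
  shows "chi_td (clone_V V) (clone_E V E) \<le> 2 * chi_td V E + 1"
proof -
  obtain f where "total_diff_labeling V E (chi_td V E) f"
    using chi_td_attained[OF assms] by blast
  moreover have "\<And>u v. E u v \<Longrightarrow> u \<in> V \<and> v \<in> V"
    using assms unfolding simple_graph_def by blast
  ultimately show ?thesis
    by (blast intro: chi_td_le total_diff_labeling_clone)
qed

end
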